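(* The polynomial $p(t)=t^4+3t^2+1$ is irreducible in $\Gamma_7=\mathbb{Q}(\zeta_7)[t,t^{-1}]$, where $\zeta_7$ is a primitive $7$-th root of unity. *)

theory Defs
  imports Complex_Main "HOL-Algebra.Ring_Divisibility"
begin

definition zeta7 :: complex where
  "zeta7 = cis (2 * pi / 7)"

definition Qzeta7 :: "complex set" where
  "Qzeta7 = \<Inter> {F. 0 \<in> F \<and> 1 \<in> F \<and> zeta7 \<in> F \<and>
                  (\<forall>x\<in>F. \<forall>y\<in>F. x + y \<in> F \<and> x * y \<in> F) \<and>
                  (\<forall>x\<in>F. - x \<in> F \<and> inverse x \<in> F)}"

text \<open>Laurent polynomials over a subfield K of C: finitely supported coefficient
  functions int => complex (coefficient of t^n at n) with all coefficients in K.\<close>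
definition laurent_mult :: "(int \<Rightarrow> complex) \<Rightarrow> (int \<Rightarrow> complex) \<Rightarrow> int \<Rightarrow> complex" where
  "laurent_mult f g = (\<lambda>n. \<Sum>m\<in>{m. f m \<noteq> 0}. f m * g (n - m))"

definition laurent_ring :: "complex set \<Rightarrow> (int \<Rightarrow> complex) ring" where
  "laurent_ring K = \<lparr> carrier = {f. finite {n. f n \<noteq> 0} \<and> (\<forall>n. f n \<in> K)},
                       monoid.mult = laurent_mult,
                       one = (\<lambda>n. if n = 0 then 1 else 0),
                       zero = (\<lambda>n. 0),
                       add = (\<lambda>f g n. f n + g n) \<rparr>"

definition Gamma7 :: "(int \<Rightarrow> complex) ring" where
  "Gamma7 = laurent_ring Qzeta7"

definition p_poly :: "int \<Rightarrow> complex" where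
  "p_poly = (\<lambda>n. if n = 0 then 1 else if n = 2 then 3 else if n = 4 then 1 else 0)"

end

theory Submission
  imports Defs "HOL-Computational_Algebra.Computational_Algebra"
    "HOL-Computational_Algebra.Field_as_Ring"
begin

text \<open>The roots of \<open>p\<close> are \<open>\<plusminus>i\<phi>\<close> and \<open>\<plusminus>i/\<phi>\<close>, \<open>\<phi>\<close> the golden ratio, so a linear factor or a
  factorisation into two quadratics over \<open>K = \<rat>(\<zeta>\<^sub>7)\<close> makes one of \<open>5, -1, -5\<close> a square in \<open>K\<close>.
  None is: \<open>K = L(\<surd>-7)\<close> with \<open>L = \<rat>(\<zeta>\<^sub>7 + \<zeta>\<^sub>7\<^sup>-\<^sup>1)\<close> the real cubic subfield, so a square root
  of such an \<open>m\<close> yields a square root of \<open>m\<close> or \<open>-7m\<close> in \<open>L\<close>, and a cubic field contains no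
  square root of a rational non-square, since its trace would be an odd multiple of it.
  Up to powers of \<open>t\<close>, evaluation turns a factorisation in \<open>\<Gamma>\<^sub>7\<close> into one in \<open>K[t]\<close>, and a
  Laurent polynomial whose associated polynomial is constant is a unit monomial.\<close>

section \<open>Identities for \<open>\<zeta>\<^sub>7\<close>\<close>

lemma zeta7_pow_7: "zeta7 ^ 7 = 1"
  unfolding zeta7_def DeMoivre by simp

lemma zeta7_neq_1: "zeta7 \<noteq> 1"
proof
  assume "zeta7 = 1"
  hence "Im zeta7 = 0" by simp
  moreover have "sin (2 * pi / 7) > 0" by (rule sin_gt_zero) auto
  ultimately show False unfolding zeta7_def by simp
qed

lemma zeta7_cyclotomic_sum: "1 + zeta7 + zeta7^2 + zeta7^3 + zeta7^4 + zeta7^5 + zeta7^6 = 0"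
proof -
  have "(zeta7 - 1) * (1 + zeta7 + zeta7^2 + zeta7^3 + zeta7^4 + zeta7^5 + zeta7^6) = zeta7^7 - 1"
    by (simp add: algebra_simps eval_nat_numeral)
  with zeta7_pow_7 zeta7_neq_1 show ?thesis by simp
qed

text \<open>The identities in \<open>\<zeta>\<^sub>7\<close> below are proved by exhibiting the quotient of the
  polynomial identity, moved to one side, by the 7th cyclotomic polynomial.\<close>

lemma eq_0_if_cyclotomic_multiple:
  fixes G Q :: complex
  assumes "G = Q * (1 + zeta7 + zeta7^2 + zeta7^3 + zeta7^4 + zeta7^5 + zeta7^6)"
  shows "G = 0"
  using assms zeta7_cyclotomic_sum by simp

definition eta :: "nat \<Rightarrow> complex" where
  "eta k = zeta7 ^ k + zeta7 ^ (7 - k)"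

definition gauss7 :: complex where
  "gauss7 = 2 * (zeta7 + zeta7^2 + zeta7^4) + 1"

lemma eta_cubic:
  assumes "k \<in> {1, 2, 3}"
  shows "eta k ^ 3 + eta k ^ 2 - 2 * eta k - 1 = 0"
proof -
  consider "k = 1" | "k = 2" | "k = 3" using assms by blast
  then show ?thesis
  proof cases
    case 1
    show ?thesis unfolding 1 eta_def
      by (rule eq_0_if_cyclotomic_multiple[where Q = "- 1 - zeta7 + 3 * zeta7^2 - zeta7^4
            - 2 * zeta7^6 + 3 * zeta7^7 - zeta7^11 + zeta7^12"])
         (simp add: algebra_simps eval_nat_numeral)
  next
    case 2
    show ?thesis unfolding 2 eta_def
      by (rule eq_0_if_cyclotomic_multiple[where Q = "- 1 + zeta7 - 2 * zeta7^2 + 2 * zeta7^3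
            + zeta7^4 - 3 * zeta7^5 + 3 * zeta7^6 - zeta7^8 + zeta7^9"])
         (simp add: algebra_simps eval_nat_numeral)
  next
    case 3
    show ?thesis unfolding 3 eta_def
      by (rule eq_0_if_cyclotomic_multiple[where Q = "- 1 + zeta7 - 2 * zeta7^3 + 2 * zeta7^5
            + zeta7^6"])
         (simp add: algebra_simps eval_nat_numeral)
  qed
qed

lemma eta_sum: "eta 1 + eta 2 + eta 3 = -1"
proof -
  have "eta 1 + eta 2 + eta 3 + 1 = 0" unfolding eta_def
    by (rule eq_0_if_cyclotomic_multiple[where Q = 1]) (simp add: algebra_simps eval_nat_numeral)
  thus ?thesis by (simp add: eq_neg_iff_add_eq_0)
qed

lemma eta_square_sum: "eta 1 ^ 2 + eta 2 ^ 2 + eta 3 ^ 2 = 5"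
proof -
  have "eta 1 ^ 2 + eta 2 ^ 2 + eta 3 ^ 2 - 5 = 0" unfolding eta_def
    by (rule eq_0_if_cyclotomic_multiple[where Q = "- 5 + 5 * zeta7 + zeta7^2 - zeta7^3
          + zeta7^4 - zeta7^5 + zeta7^6"])
       (simp add: algebra_simps eval_nat_numeral)
  thus ?thesis by simp
qed

lemma gauss7_square: "gauss7 ^ 2 = -7"
proof -
  have "gauss7 ^ 2 + 7 = 0" unfolding gauss7_def
    by (rule eq_0_if_cyclotomic_multiple[where Q = "8 - 4 * zeta7 + 4 * zeta7^2"])
       (simp add: algebra_simps eval_nat_numeral)
  thus ?thesis by (simp add: eq_neg_iff_add_eq_0)
qed

lemma zeta7_eq_eta_gauss7: "zeta7 = eta 1 / 2 + (- (2 * eta 1 ^ 2 - eta 1 - 6) / 14) * gauss7"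
proof -
  have "7 * eta 1 - (2 * eta 1 ^ 2 - eta 1 - 6) * gauss7 - 14 * zeta7 = 0"
    unfolding eta_def gauss7_def
    by (rule eq_0_if_cyclotomic_multiple[where Q = "6 + 6 * zeta7^2 - 14 * zeta7^3 + 10 * zeta7^4
          - 6 * zeta7^5 + 2 * zeta7^6 - 4 * zeta7^8 + 4 * zeta7^9 - 4 * zeta7^10"])
       (simp add: algebra_simps eval_nat_numeral)
  thus ?thesis by (simp add: field_simps)
qed

lemma cnj_zeta7_pow:
  assumes "k \<le> 7"
  shows "cnj (zeta7 ^ k) = zeta7 ^ (7 - k)"
proof -
  have "norm (zeta7 ^ k) = 1" unfolding zeta7_def by (simp add: norm_power)
  hence "zeta7 ^ k * cnj (zeta7 ^ k) = 1" using complex_norm_square[of "zeta7 ^ k"] by simp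
  moreover have "zeta7 ^ k * zeta7 ^ (7 - k) = 1"
    using assms zeta7_pow_7 by (simp flip: power_add)
  ultimately show ?thesis by (metis inverse_unique)
qed

lemma eta_real: "k \<le> 7 \<Longrightarrow> eta k \<in> \<real>"
  unfolding eta_def by (metis cnj_zeta7_pow complex_add_cnj Reals_of_real)

lemma Reals_square_neq_neg:
  fixes y :: complex
  assumes "y \<in> \<real>" "c > 0"
  shows "y ^ 2 \<noteq> - of_real c"
proof
  assume sq: "y ^ 2 = - of_real c"
  obtain t where "y = of_real t" using assms(1) by (auto elim: Reals_cases)
  hence "of_real (t ^ 2) = (of_real (- c) :: complex)" using sq by simp
  hence "t ^ 2 = - c" by (simp only: of_real_eq_iff)
  thus False using assms(2) by (metis neg_less_0_iff_less not_less zero_le_power2)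
qed

lemma gauss7_not_real: "gauss7 \<notin> \<real>"
  using Reals_square_neq_neg[of gauss7 7] gauss7_square by auto

section \<open>Rational polynomials evaluated in \<open>\<complex>\<close>\<close>

definition rat_poly_eval :: "rat poly \<Rightarrow> complex \<Rightarrow> complex" where
  "rat_poly_eval g x = poly (map_poly of_rat g) x"

lemma rat_poly_eval_altdef: "rat_poly_eval g x = (\<Sum>i\<le>degree g. of_rat (coeff g i) * x ^ i)"
  unfolding rat_poly_eval_def poly_altdef by (simp add: coeff_map_poly degree_map_poly)

lemma rat_poly_eval_add [simp]: "rat_poly_eval (g + h) x = rat_poly_eval g x + rat_poly_eval h x"
proof -
  have "map_poly (of_rat :: rat \<Rightarrow> complex) (g + h) = map_poly of_rat g + map_poly of_rat h"
    by (rule poly_eqI) (simp add: coeff_map_poly of_rat_add)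
  thus ?thesis by (simp add: rat_poly_eval_def)
qed

lemma rat_poly_eval_diff [simp]: "rat_poly_eval (g - h) x = rat_poly_eval g x - rat_poly_eval h x"
proof -
  have "map_poly (of_rat :: rat \<Rightarrow> complex) (g - h) = map_poly of_rat g - map_poly of_rat h"
    by (rule poly_eqI) (simp add: coeff_map_poly of_rat_diff)
  thus ?thesis by (simp add: rat_poly_eval_def)
qed

lemma rat_poly_eval_mult [simp]: "rat_poly_eval (g * h) x = rat_poly_eval g x * rat_poly_eval h x"
proof -
  have "map_poly (of_rat :: rat \<Rightarrow> complex) (g * h) = map_poly of_rat g * map_poly of_rat h"
    by (rule poly_eqI) (simp add: coeff_map_poly coeff_mult of_rat_sum of_rat_mult)
  thus ?thesis by (simp add: rat_poly_eval_def)
qed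

lemma rat_poly_eval_uminus [simp]: "rat_poly_eval (- g) x = - rat_poly_eval g x"
  using rat_poly_eval_diff[of 0 g x] by (simp add: rat_poly_eval_def)

lemma rat_poly_eval_pCons [simp]:
  "rat_poly_eval (pCons c g) x = of_rat c + x * rat_poly_eval g x"
  by (simp add: rat_poly_eval_def map_poly_pCons)

lemma rat_poly_eval_0 [simp]: "rat_poly_eval 0 x = 0"
  by (simp add: rat_poly_eval_def)

lemma rat_poly_eval_1 [simp]: "rat_poly_eval 1 x = 1"
  by (simp add: rat_poly_eval_def)

lemma rat_poly_eval_power [simp]: "rat_poly_eval (g ^ n) x = rat_poly_eval g x ^ n"
  by (induction n) auto

lemma rat_poly_eval_real:
  assumes "x \<in> \<real>"
  shows "rat_poly_eval g x \<in> \<real>"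
proof -
  have "(of_rat q :: complex) \<in> \<real>" for q
    by (rule Rats_cases'[of "of_rat q :: complex"]) auto
  thus ?thesis unfolding rat_poly_eval_altdef using assms by (auto intro!: sum_in_Reals Reals_mult Reals_power)
qed

lemma poly_linear_root:
  fixes d :: "'a::field poly"
  assumes "degree d = 1"
  shows "poly d (- coeff d 0 / coeff d 1) = 0"
proof -
  have d: "d = [:coeff d 0, coeff d 1:]"
    by (rule poly_eqI) (auto simp: coeff_pCons coeff_eq_0 assms split: nat.splits)
  have "coeff d 1 \<noteq> 0" using assms leading_coeff_neq_0[of d] by fastforce
  thus ?thesis by (subst d) (simp add: field_simps)
qed

lemma irreducible_if_no_root_degree_le_3:
  fixes f :: "'a::field poly"
  assumes deg: "2 \<le> degree f" "degree f \<le> 3" and no_root: "\<And>x. poly f x \<noteq> 0"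
  shows "irreducible f"
proof (rule irreducibleI)
  show nz: "f \<noteq> 0" using deg by auto
  show "\<not> is_unit f" using deg is_unit_iff_degree[OF nz] by simp
  fix a b assume f: "f = a * b"
  hence a: "a \<noteq> 0" and b: "b \<noteq> 0" using nz by auto
  have no_linear: "degree d \<noteq> 1" if "d dvd f" for d
    using poly_linear_root[of d] no_root that by (metis dvdE poly_mult mult_zero_left)
  have "degree a + degree b \<le> 3" using degree_mult_eq[OF a b] f deg by simp
  hence "degree a = 0 \<or> degree b = 0" using no_linear[of a] no_linear[of b] f by fastforce
  thus "is_unit a \<or> is_unit b" using is_unit_iff_degree a b by blast
qed

definition eta_min_poly :: "rat poly" where
  "eta_min_poly = [:-1, -2, 1, 1:]"

lemma eta_min_poly_no_root: "poly eta_min_poly x \<noteq> 0"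
proof
  assume "poly eta_min_poly x = 0"
  hence h: "x^3 + x^2 - 2*x - 1 = 0" by (simp add: eta_min_poly_def algebra_simps eval_nat_numeral)
  obtain a b where ab: "quotient_of x = (a, b)" by (cases "quotient_of x")
  have b0: "b > 0" and cop: "coprime a b" and x: "x = of_int a / of_int b"
    using quotient_of_denom_pos[OF ab] quotient_of_coprime[OF ab] quotient_of_div[OF ab] by auto
  have "rat_of_int (a^3 + a^2*b - 2*a*b^2 - b^3) = (of_int b)^3 * (x^3 + x^2 - 2*x - 1)"
    using b0 by (simp add: x field_simps power3_eq_cube power2_eq_square)
  hence "rat_of_int (a^3 + a^2*b - 2*a*b^2 - b^3) = 0" by (simp only: h mult_zero_right)
  hence e: "a^3 + a^2*b - 2*a*b^2 - b^3 = 0" by (simp only: of_int_eq_0_iff)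
  have "a^3 = b * (b^2 + 2*a*b - a^2)"
    using e by (simp add: algebra_simps power2_eq_square power3_eq_cube)
  hence "b dvd a^3" by simp
  moreover have "coprime b (a^3)" using cop by (simp add: coprime_commute)
  ultimately have "is_unit b" by (metis coprime_common_divisor dvd_refl)
  hence b1: "b = 1" using b0 by auto
  hence "a * (a^2 + a - 2) = 1" using e by (simp add: algebra_simps power2_eq_square power3_eq_cube)
  hence "is_unit a" by (metis dvd_triv_left)
  hence "a = 1 \<or> a = -1" by auto
  thus False using e b1 by auto
qed

lemma irreducible_eta_min_poly: "irreducible eta_min_poly"
  by (rule irreducible_if_no_root_degree_le_3[OF _ _ eta_min_poly_no_root])
     (simp_all add: eta_min_poly_def)

lemma eta_min_poly_eta: "k \<in> {1, 2, 3} \<Longrightarrow> rat_poly_eval eta_min_poly (eta k) = 0"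
  using eta_cubic[of k] by (simp add: eta_min_poly_def algebra_simps eval_nat_numeral)

section \<open>Subfields of \<open>\<complex>\<close>\<close>

locale complex_subfield =
  fixes F :: "complex set"
  assumes zero_mem: "0 \<in> F" and one_mem: "1 \<in> F"
    and add_mem: "x \<in> F \<Longrightarrow> y \<in> F \<Longrightarrow> x + y \<in> F"
    and mult_mem: "x \<in> F \<Longrightarrow> y \<in> F \<Longrightarrow> x * y \<in> F"
    and uminus_mem: "x \<in> F \<Longrightarrow> - x \<in> F"
    and inverse_mem: "x \<in> F \<Longrightarrow> inverse x \<in> F"
begin

lemma diff_mem: "x \<in> F \<Longrightarrow> y \<in> F \<Longrightarrow> x - y \<in> F"
  using add_mem uminus_mem by (metis diff_conv_add_uminus)

lemma divide_mem: "x \<in> F \<Longrightarrow> y \<in> F \<Longrightarrow> x / y \<in> F"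
  using mult_mem inverse_mem by (metis divide_inverse)

lemma power_mem: "x \<in> F \<Longrightarrow> x ^ n \<in> F"
  by (induction n) (simp_all add: one_mem mult_mem)

lemma of_nat_mem: "of_nat n \<in> F"
  by (induction n) (simp_all add: zero_mem one_mem add_mem)

lemma numeral_mem: "numeral n \<in> F"
  using of_nat_mem[of "numeral n"] by simp

end

lemma complex_subfield_Qzeta7: "complex_subfield Qzeta7"
  by unfold_locales (auto simp: Qzeta7_def)

lemma Qzeta7_subset: "complex_subfield F \<Longrightarrow> zeta7 \<in> F \<Longrightarrow> Qzeta7 \<subseteq> F"
  unfolding Qzeta7_def complex_subfield_def by (rule Inter_lower) simp

definition rat_adjoin :: "complex \<Rightarrow> complex set" where
  "rat_adjoin \<alpha> = range (\<lambda>g. rat_poly_eval g \<alpha>)"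

lemma rat_poly_eval_in_rat_adjoin: "rat_poly_eval g \<alpha> \<in> rat_adjoin \<alpha>"
  unfolding rat_adjoin_def by blast

lemma rat_poly_eval_invertible_if_coprime:
  assumes "coprime f g" "rat_poly_eval f \<alpha> = 0"
  obtains v where "rat_poly_eval g \<alpha> * rat_poly_eval v \<alpha> = 1"
proof
  let ?u = "fst (bezout_coefficients f g)" and ?v = "snd (bezout_coefficients f g)"
  have "?u * f + ?v * g = 1"
    using bezout_coefficients_fst_snd[of f g] assms(1) by simp
  hence "rat_poly_eval (?u * f + ?v * g) \<alpha> = 1" by simp
  thus "rat_poly_eval g \<alpha> * rat_poly_eval ?v \<alpha> = 1" using assms(2) by (simp add: mult.commute)
qed

lemma dvd_if_rat_poly_eval_eq_0:
  assumes "irreducible f" "rat_poly_eval f \<alpha> = 0" "rat_poly_eval g \<alpha> = 0"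
  shows "f dvd g"
proof (rule ccontr)
  assume "\<not> f dvd g"
  hence "coprime f g"
    by (rule prime_elem_imp_coprime[OF field_poly_irreducible_imp_prime[OF assms(1)]])
  then obtain v where "rat_poly_eval g \<alpha> * rat_poly_eval v \<alpha> = 1"
    using assms(2) by (rule rat_poly_eval_invertible_if_coprime)
  thus False using assms(3) by simp
qed

lemma complex_subfield_rat_adjoin:
  assumes f: "irreducible f" "rat_poly_eval f \<alpha> = 0"
  shows "complex_subfield (rat_adjoin \<alpha>)"
proof
  fix x y assume "x \<in> rat_adjoin \<alpha>" "y \<in> rat_adjoin \<alpha>"
  then obtain g h where x: "x = rat_poly_eval g \<alpha>" and y: "y = rat_poly_eval h \<alpha>"
    unfolding rat_adjoin_def by blast
  show "x + y \<in> rat_adjoin \<alpha>" "x * y \<in> rat_adjoin \<alpha>" "- x \<in> rat_adjoin \<alpha>"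
    using rat_poly_eval_in_rat_adjoin[of "g + h"] rat_poly_eval_in_rat_adjoin[of "g * h"]
      rat_poly_eval_in_rat_adjoin[of "- g"] x y by simp_all
  show "inverse x \<in> rat_adjoin \<alpha>"
  proof (cases "x = 0")
    case True
    thus ?thesis using rat_poly_eval_in_rat_adjoin[of 0] by simp
  next
    case False
    have "\<not> f dvd g" using f(2) False x by (auto elim!: dvdE)
    hence "coprime f g"
      by (rule prime_elem_imp_coprime[OF field_poly_irreducible_imp_prime[OF f(1)]])
    then obtain v where "x * rat_poly_eval v \<alpha> = 1"
      using f(2) x by (metis rat_poly_eval_invertible_if_coprime)
    hence "inverse x = rat_poly_eval v \<alpha>" by (rule inverse_unique)
    thus ?thesis by (simp add: rat_poly_eval_in_rat_adjoin)
  qed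
next
  show "0 \<in> rat_adjoin \<alpha>" "1 \<in> rat_adjoin \<alpha>"
    using rat_poly_eval_in_rat_adjoin[of 0] rat_poly_eval_in_rat_adjoin[of 1] by simp_all
qed

lemma rat_adjoin_subset_Reals: "\<alpha> \<in> \<real> \<Longrightarrow> rat_adjoin \<alpha> \<subseteq> \<real>"
  unfolding rat_adjoin_def using rat_poly_eval_real by blast

lemma self_in_rat_adjoin: "\<alpha> \<in> rat_adjoin \<alpha>"
  using rat_poly_eval_in_rat_adjoin[of "[:0, 1:]"] by simp

definition quadratic_ext :: "complex set \<Rightarrow> complex \<Rightarrow> complex set" where
  "quadratic_ext F w = {a + b * w | a b. a \<in> F \<and> b \<in> F}"

lemma quadratic_extI: "a \<in> F \<Longrightarrow> b \<in> F \<Longrightarrow> a + b * w \<in> quadratic_ext F w"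
  unfolding quadratic_ext_def by blast

lemma (in complex_subfield) complex_subfield_quadratic_ext:
  assumes real: "F \<subseteq> \<real>" and w: "w ^ 2 \<in> F" "w \<notin> \<real>"
  shows "complex_subfield (quadratic_ext F w)"
proof
  show "0 \<in> quadratic_ext F w" "1 \<in> quadratic_ext F w"
    using quadratic_extI[OF zero_mem zero_mem] quadratic_extI[OF one_mem zero_mem] by simp_all
next
  fix x y assume "x \<in> quadratic_ext F w" "y \<in> quadratic_ext F w"
  then obtain a b a' b' where ab: "a \<in> F" "b \<in> F" "x = a + b * w"
    and ab': "a' \<in> F" "b' \<in> F" "y = a' + b' * w" unfolding quadratic_ext_def by blast
  have "x + y = (a + a') + (b + b') * w" using ab ab' by (simp add: algebra_simps)
  thus "x + y \<in> quadratic_ext F w" using ab ab' by (metis quadratic_extI add_mem)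
  have "- x = - a + (- b) * w" using ab by simp
  thus "- x \<in> quadratic_ext F w" using ab by (metis quadratic_extI uminus_mem)
  have "x * y = (a * a' + b * b' * w ^ 2) + (a * b' + a' * b) * w"
    using ab ab' by (simp add: algebra_simps power2_eq_square)
  thus "x * y \<in> quadratic_ext F w"
    using ab ab' w by (simp add: quadratic_extI add_mem mult_mem)
  define N where "N = a ^ 2 - b ^ 2 * w ^ 2"
  show "inverse x \<in> quadratic_ext F w"
  proof (cases "x = 0")
    case True
    thus ?thesis using quadratic_extI[OF zero_mem zero_mem] by simp
  next
    case False
    have "N \<noteq> 0" \<comment> \<open>otherwise \<open>w = \<plusminus>a/b\<close> would be real\<close>
    proof
      assume N: "N = 0"
      show False
      proof (cases "b = 0")
        case True
        thus False using N False ab by (simp add: N_def)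
      next
        case b: False
        have "w ^ 2 = (a / b) ^ 2" using N b by (simp add: N_def field_simps)
        hence "w = a / b \<or> w = - (a / b)" by (simp add: power2_eq_iff)
        moreover have "a / b \<in> \<real>" using ab real by (blast intro: Reals_divide)
        ultimately show False using w(2) by auto
      qed
    qed
    have "x * (a / N + (- b / N) * w) = (a ^ 2 - b ^ 2 * w ^ 2) / N"
      using ab \<open>N \<noteq> 0\<close> by (simp add: field_simps power2_eq_square)
    also have "\<dots> = 1" using \<open>N \<noteq> 0\<close> by (simp add: N_def)
    finally have "x * (a / N + (- b / N) * w) = 1" .
    hence "inverse x = a / N + (- b / N) * w" by (rule inverse_unique)
    moreover have "N \<in> F" using ab w by (simp add: N_def diff_mem mult_mem power_mem)
    ultimately show ?thesis using ab by (metis quadratic_extI divide_mem uminus_mem)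
  qed
qed

lemma square_real_in_quadratic_ext:
  assumes "F \<subseteq> \<real>" "w \<notin> \<real>" "w ^ 2 \<in> \<real>"
    and "x \<in> quadratic_ext F w" "x ^ 2 \<in> \<real>"
  shows "x \<in> F \<or> (\<exists>b\<in>F. x = b * w)"
proof -
  obtain a b where ab: "a \<in> F" "b \<in> F" "x = a + b * w"
    using assms(4) unfolding quadratic_ext_def by blast
  have real: "a \<in> \<real>" "b \<in> \<real>" using ab assms(1) by auto
  have sq: "x ^ 2 = (a ^ 2 + b ^ 2 * w ^ 2) + 2 * a * b * w"
    using ab by (simp add: algebra_simps power2_eq_square)
  have "a = 0 \<or> b = 0"
  proof (rule ccontr)
    assume "\<not> (a = 0 \<or> b = 0)"
    hence "w = (x ^ 2 - (a ^ 2 + b ^ 2 * w ^ 2)) / (2 * a * b)"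
      using sq by (simp add: field_simps)
    also have "\<dots> \<in> \<real>" using real assms(3,5) by auto
    finally show False using assms(2) by blast
  qed
  thus ?thesis using ab by auto
qed

section \<open>Square roots in \<open>\<rat>(\<zeta>\<^sub>7)\<close>\<close>

lemma eta_power_sum_Rats: "eta 1 ^ n + eta 2 ^ n + eta 3 ^ n \<in> \<rat>"
proof (induction n rule: less_induct)
  case (less n)
  have recurrence: "eta k ^ (m + 3) = - (eta k ^ (m + 2)) + 2 * eta k ^ (m + 1) + eta k ^ m"
    if "k \<in> {1, 2, 3}" for k m
  proof -
    have cube: "eta k ^ 3 = 1 + 2 * eta k - eta k ^ 2" using eta_cubic[OF that] by (simp add: algebra_simps)
    have "eta k ^ (m + 3) = eta k ^ m * eta k ^ 3" by (simp add: power_add)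
    thus ?thesis unfolding cube by (simp add: power_add algebra_simps power2_eq_square)
  qed
  show ?case
  proof (cases "n < 3")
    case True
    hence "n = 0 \<or> n = 1 \<or> n = 2" by auto
    thus ?thesis using eta_sum eta_square_sum by auto
  next
    case False
    then obtain m where n: "n = m + 3" by (metis add.commute le_add_diff_inverse not_less)
    have "eta 1 ^ n + eta 2 ^ n + eta 3 ^ n =
        - (eta 1 ^ (m + 2) + eta 2 ^ (m + 2) + eta 3 ^ (m + 2))
        + 2 * (eta 1 ^ (m + 1) + eta 2 ^ (m + 1) + eta 3 ^ (m + 1))
        + (eta 1 ^ m + eta 2 ^ m + eta 3 ^ m)"
      unfolding n by (simp add: recurrence algebra_simps)
    also have "\<dots> \<in> \<rat>"
    proof -
      have "eta 1 ^ j + eta 2 ^ j + eta 3 ^ j \<in> \<rat>" if "j \<in> {m, m + 1, m + 2}" for j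
        using n that by (intro less.IH) auto
      thus ?thesis by (metis insertI1 insertI2 Rats_add Rats_mult Rats_minus_iff Rats_number_of)
    qed
    finally show ?thesis .
  qed
qed

lemma eta_trace_Rats: "rat_poly_eval g (eta 1) + rat_poly_eval g (eta 2) + rat_poly_eval g (eta 3) \<in> \<rat>"
proof -
  have "rat_poly_eval g (eta 1) + rat_poly_eval g (eta 2) + rat_poly_eval g (eta 3) =
      (\<Sum>i\<le>degree g. of_rat (coeff g i) * (eta 1 ^ i + eta 2 ^ i + eta 3 ^ i))"
    unfolding rat_poly_eval_altdef by (simp add: sum.distrib distrib_left)
  also have "\<dots> \<in> \<rat>" using eta_power_sum_Rats by (auto intro!: Rats_sum Rats_mult)
  finally show ?thesis .
qed

text \<open>The cubic field has no quadratic subfield: if \<open>y\<^sup>2\<close> is rational, so is the square of each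
  conjugate of \<open>y\<close>, hence the conjugates are \<open>\<plusminus>y\<close>, and the rational trace is an odd multiple of \<open>y\<close>.\<close>

lemma rat_adjoin_eta_square_Rats:
  assumes "y \<in> rat_adjoin (eta 1)" "y ^ 2 \<in> \<rat>"
  shows "y \<in> \<rat>"
proof -
  obtain g where y: "y = rat_poly_eval g (eta 1)" using assms(1) unfolding rat_adjoin_def by blast
  obtain q where q: "y ^ 2 = of_rat q" using assms(2) by (auto elim: Rats_cases)
  define h where "h = g ^ 2 - [:q:]"
  have "rat_poly_eval h (eta 1) = 0" using q y by (simp add: h_def)
  hence "eta_min_poly dvd h"
    by (rule dvd_if_rat_poly_eval_eq_0[OF irreducible_eta_min_poly eta_min_poly_eta, rotated]) simp
  hence "rat_poly_eval h (eta k) = 0" if "k \<in> {2, 3}" for k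
    using eta_min_poly_eta[of k] that by (auto elim!: dvdE)
  hence "rat_poly_eval g (eta k) ^ 2 = y ^ 2" if "k \<in> {2, 3}" for k
    using that q by (simp add: h_def)
  hence conj: "rat_poly_eval g (eta k) = y \<or> rat_poly_eval g (eta k) = - y" if "k \<in> {2, 3}" for k
    using that by (simp add: power2_eq_iff)
  have "y + rat_poly_eval g (eta 2) + rat_poly_eval g (eta 3) \<in> {3 * y, y, - y}"
    using conj[of 2] conj[of 3] by auto
  moreover have "y + rat_poly_eval g (eta 2) + rat_poly_eval g (eta 3) \<in> \<rat>"
    using eta_trace_Rats y by simp
  ultimately show "y \<in> \<rat>"
    by (metis insertE empty_iff Rats_minus_iff Rats_divide Rats_number_of
        nonzero_mult_div_cancel_left zero_neq_numeral)
qed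

lemma square_if_Rats_square_eq_of_nat:
  fixes x :: complex
  assumes "x \<in> \<rat>" "x ^ 2 = of_nat m"
  shows "\<exists>k. m = k ^ 2"
proof -
  obtain a b where b: "b > 0" "coprime a b" and x: "x = of_int a / of_int b"
    using assms(1) by (rule Rats_cases')
  have "of_int (a ^ 2) = (of_int (int m * b ^ 2) :: complex)"
    using assms(2) b(1) by (simp add: x field_simps power2_eq_square)
  hence e: "a ^ 2 = int m * b ^ 2" by (simp only: of_int_eq_iff)
  hence "b dvd a ^ 2" by (simp add: power2_eq_square)
  moreover have "coprime b (a ^ 2)" using b(2) by (simp add: coprime_commute)
  ultimately have "is_unit b" by (metis coprime_common_divisor dvd_refl)
  hence "m = nat \<bar>a\<bar> ^ 2" using b(1) e by (simp add: nat_power_eq[symmetric])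
  thus ?thesis by blast
qed

lemma not_square_5_7_35:
  assumes "m \<in> {5, 7, 35}"
  shows "(k :: nat) ^ 2 \<noteq> m"
proof
  assume k: "k ^ 2 = m"
  have "k \<le> 5"
  proof (rule ccontr)
    assume "\<not> k \<le> 5"
    hence "6 ^ 2 \<le> k ^ 2" by (intro power_mono) auto
    thus False using k assms by auto
  qed
  hence "k \<in> {0, 1, 2, 3, 4, 5}" by auto
  thus False using k assms by auto
qed

interpretation eta_field: complex_subfield "rat_adjoin (eta 1)"
  by (rule complex_subfield_rat_adjoin[OF irreducible_eta_min_poly eta_min_poly_eta]) simp

lemma eta_field_subset_Reals: "rat_adjoin (eta 1) \<subseteq> \<real>"
  by (simp add: rat_adjoin_subset_Reals eta_real)

lemma Qzeta7_subset_quadratic_ext: "Qzeta7 \<subseteq> quadratic_ext (rat_adjoin (eta 1)) gauss7"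
proof (rule Qzeta7_subset)
  show "complex_subfield (quadratic_ext (rat_adjoin (eta 1)) gauss7)"
    by (rule eta_field.complex_subfield_quadratic_ext[OF eta_field_subset_Reals _ gauss7_not_real])
       (unfold gauss7_square, intro eta_field.uminus_mem eta_field.numeral_mem)
  have "eta 1 / 2 \<in> rat_adjoin (eta 1)" "- (2 * eta 1 ^ 2 - eta 1 - 6) / 14 \<in> rat_adjoin (eta 1)"
    using self_in_rat_adjoin
    by (intro eta_field.divide_mem eta_field.uminus_mem eta_field.diff_mem eta_field.mult_mem
        eta_field.power_mem eta_field.numeral_mem; simp)+
  thus "zeta7 \<in> quadratic_ext (rat_adjoin (eta 1)) gauss7"
    by (subst zeta7_eq_eta_gauss7) (rule quadratic_extI)
qed

lemma eta_field_square_neq: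
  assumes "y \<in> rat_adjoin (eta 1)" "m \<in> {5, 7, 35}"
  shows "y ^ 2 \<noteq> of_nat m"
  using assms rat_adjoin_eta_square_Rats square_if_Rats_square_eq_of_nat not_square_5_7_35
  by (metis Rats_of_nat)

lemma Qzeta7_square_neq:
  assumes "x \<in> Qzeta7"
  shows "x ^ 2 \<notin> {5, -1, -5}"
proof
  let ?F = "rat_adjoin (eta 1)"
  assume sq: "x ^ 2 \<in> {5, -1, -5}"
  have "x ^ 2 \<in> \<real>" "gauss7 ^ 2 \<in> \<real>" using sq gauss7_square by auto
  hence "x \<in> ?F \<or> (\<exists>b\<in>?F. x = b * gauss7)"
    using square_real_in_quadratic_ext[OF eta_field_subset_Reals gauss7_not_real]
      Qzeta7_subset_quadratic_ext assms by blast
  thus False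
  proof
    assume "x \<in> ?F"
    thus False using sq eta_field_square_neq[of x 5] eta_field_subset_Reals
        Reals_square_neq_neg[of x 1] Reals_square_neq_neg[of x 5] by auto
  next
    assume "\<exists>b\<in>?F. x = b * gauss7"
    then obtain b where b: "b \<in> ?F" "x = b * gauss7" by blast
    have b2: "b ^ 2 = - (x ^ 2 / 7)" and b7: "(7 * b) ^ 2 = - 7 * x ^ 2"
      using b gauss7_square by (simp_all add: power_mult_distrib)
    have "7 * b \<in> ?F" using b(1) by (intro eta_field.mult_mem eta_field.numeral_mem)
    moreover have "b \<in> \<real>" using b eta_field_subset_Reals by auto
    ultimately have "x ^ 2 \<noteq> 5" "x ^ 2 \<noteq> -1" "x ^ 2 \<noteq> -5"
      using b2 b7 eta_field_square_neq[of "7 * b" 7] eta_field_square_neq[of "7 * b" 35]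
        Reals_square_neq_neg[of b "5 / 7"] by auto
    thus False using sq by blast
  qed
qed

section \<open>Factorisations of \<open>p\<close> as an ordinary polynomial\<close>

definition p_as_poly :: "complex poly" where
  "p_as_poly = [:1, 0, 3, 0, 1:]"

lemma poly_p_as_poly: "poly p_as_poly x = 1 + 3 * x ^ 2 + x ^ 4"
  by (simp add: p_as_poly_def algebra_simps eval_nat_numeral)

text \<open>Normalise a factorisation into quadratics by \<open>a\<^sub>2\<close>; comparing the coefficients of
  \<open>t\<^sup>1\<close> and \<open>t\<^sup>3\<close> shows that the two linear coefficients are opposite, and then either both
  vanish and the constant terms are the roots of \<open>X\<^sup>2 - 3X + 1\<close>, or the constant terms are equal.\<close>

lemma quadratic_factors_of_p:
  fixes a0 a1 a2 b0 b1 b2 :: complex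
  assumes e0: "a0 * b0 = 1" and e1: "a0 * b1 + a1 * b0 = 0" and e2: "a0 * b2 + a1 * b1 + a2 * b0 = 3"
    and e3: "a1 * b2 + a2 * b1 = 0" and e4: "a2 * b2 = 1"
  shows "(2 * (a0 / a2) - 3) ^ 2 = 5 \<or> (a1 / a2) ^ 2 = -1 \<or> (a1 / a2) ^ 2 = -5"
proof -
  have a2: "a2 \<noteq> 0" using e4 by auto
  hence b2: "b2 = 1 / a2" using e4 by (simp add: field_simps)
  define q s u v where "q = a0 / a2" and "s = a1 / a2" and "u = a2 * b1" and "v = a2 * b0"
  have E1: "q * v = 1" using e0 a2 unfolding q_def v_def by simp
  have E2: "q * u + s * v = 0" using e1 a2 unfolding q_def s_def u_def v_def by simp
  have "s * u = a1 * b1" "q = a0 * b2" unfolding s_def u_def q_def b2 using a2 by simp_all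
  hence E3: "q + s * u + v = 3" using e2 unfolding v_def by (simp add: mult.commute)
  have "s + u = 0" using e3 a2 unfolding s_def u_def b2 by (simp add: divide_inverse)
  hence u: "u = - s" by (simp add: eq_neg_iff_add_eq_0 add.commute)
  have "s * (v - q) = 0" using E2 u by (simp add: algebra_simps)
  hence "s = 0 \<or> v = q" by simp
  thus ?thesis
  proof
    assume "s = 0"
    hence v: "v = 3 - q" using E3 by (simp add: algebra_simps)
    have "(2 * q - 3) ^ 2 = 5 - 4 * (q * v - 1)" unfolding v by (simp add: algebra_simps power2_eq_square)
    thus ?thesis using E1 by (simp add: q_def)
  next
    assume v: "v = q"
    hence "(q - 1) * (q + 1) = 0" using E1 by (simp add: algebra_simps)
    hence "q = 1 \<or> q = -1" by (simp add: eq_neg_iff_add_eq_0)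
    moreover have "s ^ 2 = 2 * q - 3" using E3 u v by (simp add: algebra_simps power2_eq_square)
    ultimately show ?thesis by (auto simp: s_def)
  qed
qed

lemma poly_degree_2_eq:
  fixes A :: "'a::zero poly"
  assumes "degree A = 2"
  shows "A = [:coeff A 0, coeff A 1, coeff A 2:]"
  by (rule poly_eqI) (auto simp: coeff_pCons coeff_eq_0 assms numeral_2_eq_2 split: nat.splits)

lemma (in complex_subfield) p_as_poly_factor_degree_0:
  assumes non_square: "\<And>x. x \<in> F \<Longrightarrow> x ^ 2 \<notin> {5, -1, -5}"
    and AB: "A * B = p_as_poly" and coeffs: "\<And>i. coeff A i \<in> F" "\<And>i. coeff B i \<in> F"
  shows "degree A = 0 \<or> degree B = 0"
proof -
  have nz: "A \<noteq> 0" "B \<noteq> 0" using AB by (auto simp: p_as_poly_def)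
  have deg: "degree A + degree B = 4"
    using degree_mult_eq[OF nz] AB by (simp add: p_as_poly_def)
  have no_linear: "degree D \<noteq> 1" if "D dvd p_as_poly" "\<And>i. coeff D i \<in> F" for D
  proof
    assume D: "degree D = 1"
    define r where "r = - coeff D 0 / coeff D 1"
    have "r \<in> F" unfolding r_def using that(2) by (simp add: divide_mem uminus_mem)
    from that(1) obtain E where "p_as_poly = D * E" by (rule dvdE)
    hence "poly p_as_poly r = poly D r * poly E r" by (metis poly_mult)
    hence "poly p_as_poly r = 0" using poly_linear_root[OF D] by (simp add: r_def)
    moreover have "(2 * r ^ 2 + 3) ^ 2 - 5 = 4 * poly p_as_poly r"
      unfolding poly_p_as_poly by (simp add: algebra_simps eval_nat_numeral)
    ultimately have "(2 * r ^ 2 + 3) ^ 2 = 5" by simp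
    moreover have "2 * r ^ 2 + 3 \<in> F"
      using \<open>r \<in> F\<close> by (simp add: add_mem mult_mem power_mem numeral_mem)
    ultimately show False using non_square by fastforce
  qed
  have "\<not> (degree A = 2 \<and> degree B = 2)"
  proof
    assume "degree A = 2 \<and> degree B = 2"
    hence "[:coeff A 0, coeff A 1, coeff A 2:] * [:coeff B 0, coeff B 1, coeff B 2:] = [:1, 0, 3, 0, 1:]"
      using AB poly_degree_2_eq[of A] poly_degree_2_eq[of B] by (simp add: p_as_poly_def)
    hence "coeff A 0 * coeff B 0 = 1" "coeff A 0 * coeff B 1 + coeff A 1 * coeff B 0 = 0"
      "coeff A 0 * coeff B 2 + coeff A 1 * coeff B 1 + coeff A 2 * coeff B 0 = 3"
      "coeff A 1 * coeff B 2 + coeff A 2 * coeff B 1 = 0" "coeff A 2 * coeff B 2 = 1"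
      by (simp_all add: algebra_simps)
    from quadratic_factors_of_p[OF this] show False
      using non_square[of "2 * (coeff A 0 / coeff A 2) - 3"] non_square[of "coeff A 1 / coeff A 2"]
      by (auto simp: coeffs diff_mem mult_mem divide_mem numeral_mem)
  qed
  moreover have "degree A \<noteq> 1" "degree B \<noteq> 1"
    using no_linear[of A] no_linear[of B] AB coeffs by (metis dvd_triv_left dvd_triv_right)+
  ultimately show ?thesis using deg by arith
qed

section \<open>Laurent polynomials\<close>

definition laurent_supp :: "(int \<Rightarrow> complex) \<Rightarrow> int set" where
  "laurent_supp f = {n. f n \<noteq> 0}"

lemma carrier_laurent_ring:
  "carrier (laurent_ring K) = {f. finite (laurent_supp f) \<and> (\<forall>n. f n \<in> K)}"
  by (simp add: laurent_ring_def laurent_supp_def)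

lemma mult_laurent_ring: "f \<otimes>\<^bsub>laurent_ring K\<^esub> g = laurent_mult f g"
  by (simp add: laurent_ring_def)

lemma one_laurent_ring: "\<one>\<^bsub>laurent_ring K\<^esub> = (\<lambda>n. if n = 0 then 1 else 0)"
  by (simp add: laurent_ring_def)

lemma zero_laurent_ring: "\<zero>\<^bsub>laurent_ring K\<^esub> = (\<lambda>n. 0)"
  by (simp add: laurent_ring_def)

lemma laurent_supp_zero [simp]: "laurent_supp (\<lambda>n. 0) = {}"
  by (simp add: laurent_supp_def)

lemma laurent_mult_supp_empty:
  assumes "laurent_supp f = {} \<or> laurent_supp g = {}"
  shows "laurent_mult f g = (\<lambda>n. 0)"
  using assms by (auto simp: laurent_mult_def laurent_supp_def)

lemma laurent_supp_mult_subset: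
  "laurent_supp (laurent_mult f g) \<subseteq> (\<lambda>(m, k). m + k) ` (laurent_supp f \<times> laurent_supp g)"
proof
  fix n assume "n \<in> laurent_supp (laurent_mult f g)"
  hence "(\<Sum>m\<in>laurent_supp f. f m * g (n - m)) \<noteq> 0"
    by (simp add: laurent_supp_def laurent_mult_def)
  then obtain m where "m \<in> laurent_supp f" "f m * g (n - m) \<noteq> 0" by (meson sum.neutral)
  hence "(m, n - m) \<in> laurent_supp f \<times> laurent_supp g" by (simp add: laurent_supp_def)
  thus "n \<in> (\<lambda>(m, k). m + k) ` (laurent_supp f \<times> laurent_supp g)" by force
qed

definition laurent_eval :: "(int \<Rightarrow> complex) \<Rightarrow> complex \<Rightarrow> complex" where
  "laurent_eval f z = (\<Sum>n\<in>laurent_supp f. f n * z powi n)"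

lemma laurent_eval_superset:
  assumes "finite S" "laurent_supp f \<subseteq> S"
  shows "laurent_eval f z = (\<Sum>n\<in>S. f n * z powi n)"
  unfolding laurent_eval_def
  by (rule sum.mono_neutral_left) (use assms in \<open>auto simp: laurent_supp_def\<close>)

lemma laurent_eval_mult:
  assumes f: "finite (laurent_supp f)" and g: "finite (laurent_supp g)" and z: "z \<noteq> 0"
  shows "laurent_eval (laurent_mult f g) z = laurent_eval f z * laurent_eval g z"
proof -
  define T where "T = (\<lambda>(m, k). m + k) ` (laurent_supp f \<times> laurent_supp g)"
  have T: "finite T" using f g by (simp add: T_def)
  have shift: "(\<Sum>n\<in>T. g (n - m) * z powi n) = z powi m * laurent_eval g z"
    if m: "m \<in> laurent_supp f" for m
  proof -
    have sub: "(\<lambda>k. m + k) ` laurent_supp g \<subseteq> T" using m by (auto simp: T_def)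
    have "(\<Sum>n\<in>T. g (n - m) * z powi n) = (\<Sum>n\<in>(\<lambda>k. m + k) ` laurent_supp g. g (n - m) * z powi n)"
      by (rule sum.mono_neutral_right[OF T sub]) (force simp: laurent_supp_def)
    also have "\<dots> = (\<Sum>k\<in>laurent_supp g. g k * z powi (m + k))"
      by (subst sum.reindex) (auto simp: inj_on_def)
    also have "\<dots> = z powi m * laurent_eval g z"
      unfolding laurent_eval_def using z by (simp add: power_int_add sum_distrib_left algebra_simps)
    finally show ?thesis .
  qed
  have "laurent_eval (laurent_mult f g) z = (\<Sum>n\<in>T. laurent_mult f g n * z powi n)"
    using laurent_supp_mult_subset by (intro laurent_eval_superset T) (simp add: T_def)
  also have "\<dots> = (\<Sum>m\<in>laurent_supp f. f m * (\<Sum>n\<in>T. g (n - m) * z powi n))"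
    by (simp add: laurent_mult_def laurent_supp_def sum_distrib_right sum_distrib_left mult.assoc
        sum.swap[of _ T])
  also have "\<dots> = laurent_eval f z * laurent_eval g z"
    unfolding laurent_eval_def[of f] sum_distrib_right by (rule sum.cong[OF refl]) (simp add: shift mult.assoc)
  finally show ?thesis .
qed

definition laurent_ord :: "(int \<Rightarrow> complex) \<Rightarrow> int" where
  "laurent_ord f = Min (laurent_supp f)"

text \<open>The ordinary polynomial \<open>t\<^sup>-\<^sup>k f(t)\<close>, where \<open>k\<close> is the order of \<open>f\<close>.\<close>

definition laurent_poly :: "(int \<Rightarrow> complex) \<Rightarrow> complex poly" where
  "laurent_poly f =
     (\<Sum>k\<le>nat (Max (laurent_supp f) - laurent_ord f). monom (f (laurent_ord f + int k)) k)"

lemma coeff_laurent_poly: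
  assumes "finite (laurent_supp f)" "laurent_supp f \<noteq> {}"
  shows "coeff (laurent_poly f) k = f (laurent_ord f + int k)"
proof -
  have "coeff (laurent_poly f) k =
      (if k \<le> nat (Max (laurent_supp f) - laurent_ord f) then f (laurent_ord f + int k) else 0)"
    unfolding laurent_poly_def by (simp add: coeff_sum coeff_monom sum.delta)
  also have "\<dots> = f (laurent_ord f + int k)"
  proof (cases "k \<le> nat (Max (laurent_supp f) - laurent_ord f)")
    case False
    hence "laurent_ord f + int k \<notin> laurent_supp f" using Max_ge[OF assms(1)] by force
    thus ?thesis using False by (simp add: laurent_supp_def)
  qed simp
  finally show ?thesis .
qed

lemma coeff_0_laurent_poly_neq_0:
  assumes "finite (laurent_supp f)" "laurent_supp f \<noteq> {}"
  shows "coeff (laurent_poly f) 0 \<noteq> 0"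
  using coeff_laurent_poly[OF assms, of 0] Min_in[OF assms]
  by (simp add: laurent_ord_def laurent_supp_def)

lemma laurent_eval_eq_poly:
  assumes "finite (laurent_supp f)" "laurent_supp f \<noteq> {}" "z \<noteq> 0"
  shows "laurent_eval f z = z powi laurent_ord f * poly (laurent_poly f) z"
proof -
  let ?lo = "laurent_ord f" and ?hi = "Max (laurent_supp f)"
  have supp: "laurent_supp f \<subseteq> {?lo..?hi}"
    using assms(1,2) by (auto simp: laurent_ord_def)
  hence "?lo \<le> ?hi" using assms(2) by auto
  have "laurent_eval f z = (\<Sum>n\<in>{?lo..?hi}. f n * z powi n)"
    by (rule laurent_eval_superset[OF _ supp]) simp
  also have "\<dots> = (\<Sum>k\<le>nat (?hi - ?lo). f (?lo + int k) * z powi (?lo + int k))"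
    by (rule sum.reindex_bij_witness[of _ "\<lambda>k. ?lo + int k" "\<lambda>n. nat (n - ?lo)"])
       (use \<open>?lo \<le> ?hi\<close> in auto)
  also have "\<dots> = z powi ?lo * poly (laurent_poly f) z"
    unfolding laurent_poly_def using assms(3)
    by (simp add: poly_sum poly_monom power_int_add sum_distrib_left algebra_simps)
  finally show ?thesis .
qed

lemma poly_eqI_nonzero:
  fixes A B :: "complex poly"
  assumes "\<And>z. z \<noteq> 0 \<Longrightarrow> poly A z = poly B z"
  shows "A = B"
proof (rule ccontr)
  assume "A \<noteq> B"
  hence "finite {z. poly (A - B) z = 0}" by (intro poly_roots_finite) simp
  moreover have "UNIV - {0} \<subseteq> {z. poly (A - B) z = 0}" using assms by auto
  ultimately have "finite (UNIV - {0 :: complex})" by (rule finite_subset[rotated])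
  thus False by (simp add: infinite_UNIV_char_0)
qed

lemma poly_eq_if_power_shift_eq:
  fixes A B :: "complex poly"
  assumes "\<And>z. z \<noteq> 0 \<Longrightarrow> z ^ k * poly A z = poly B z" "coeff B 0 \<noteq> 0"
  shows "k = 0 \<and> A = B"
proof -
  have B: "B = monom 1 k * A" by (rule poly_eqI_nonzero) (simp add: assms(1) poly_monom)
  hence "k = 0" using assms(2) by (metis coeff_mult_0 coeff_monom mult_zero_left)
  thus ?thesis using B by simp
qed

lemma poly_eq_if_shift_eq:
  fixes A B :: "complex poly"
  assumes shift: "\<And>z. z \<noteq> 0 \<Longrightarrow> z powi k * poly A z = poly B z"
    and "coeff A 0 \<noteq> 0" "coeff B 0 \<noteq> 0"
  shows "A = B"
proof (cases "k \<ge> 0")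
  case True
  have "z ^ nat k * poly A z = poly B z" if "z \<noteq> 0" for z
    using shift[OF that] True by (simp add: power_int_def)
  thus ?thesis using poly_eq_if_power_shift_eq assms(3) by blast
next
  case False
  have "z ^ nat (- k) * poly B z = poly A z" if "z \<noteq> 0" for z
    using shift[OF that] False that by (auto simp: power_int_def field_simps)
  thus ?thesis using poly_eq_if_power_shift_eq assms(2) by metis
qed

lemma laurent_poly_mult:
  assumes b: "finite (laurent_supp b)" "laurent_supp b \<noteq> {}"
    and c: "finite (laurent_supp c)" "laurent_supp c \<noteq> {}"
    and bc: "laurent_supp (laurent_mult b c) \<noteq> {}"
  shows "laurent_poly (laurent_mult b c) = laurent_poly b * laurent_poly c"
proof -
  have fin: "finite (laurent_supp (laurent_mult b c))"
    using finite_subset[OF laurent_supp_mult_subset] b(1) c(1) by blast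
  have "z powi (laurent_ord (laurent_mult b c) - (laurent_ord b + laurent_ord c))
      * poly (laurent_poly (laurent_mult b c)) z = poly (laurent_poly b * laurent_poly c) z"
    if z: "z \<noteq> 0" for z
  proof -
    have "z powi laurent_ord (laurent_mult b c) * poly (laurent_poly (laurent_mult b c)) z =
        z powi (laurent_ord b + laurent_ord c) * poly (laurent_poly b * laurent_poly c) z"
      using laurent_eval_mult[OF b(1) c(1) z] laurent_eval_eq_poly[OF fin bc z]
        laurent_eval_eq_poly[OF b z] laurent_eval_eq_poly[OF c z] z
      by (simp add: power_int_add ac_simps)
    thus ?thesis using z by (simp add: power_int_diff field_simps)
  qed
  moreover have "coeff (laurent_poly (laurent_mult b c)) 0 \<noteq> 0"
    by (rule coeff_0_laurent_poly_neq_0[OF fin bc])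
  moreover have "coeff (laurent_poly b * laurent_poly c) 0 \<noteq> 0"
    using coeff_0_laurent_poly_neq_0[OF b] coeff_0_laurent_poly_neq_0[OF c] by (simp add: coeff_mult_0)
  ultimately show ?thesis by (rule poly_eq_if_shift_eq)
qed

lemma laurent_supp_p_poly: "laurent_supp p_poly = {0, 2, 4}"
  by (auto simp: laurent_supp_def p_poly_def)

lemma p_poly_neq_0: "p_poly \<noteq> (\<lambda>n. 0)"
proof
  assume "p_poly = (\<lambda>n. 0)"
  hence "p_poly 0 = (\<lambda>n. 0 :: complex) 0" by (rule fun_cong)
  thus False by (simp add: p_poly_def)
qed

lemma laurent_poly_p_poly: "laurent_poly p_poly = p_as_poly"
proof (rule poly_eqI)
  fix k
  have "laurent_ord p_poly = 0" by (simp add: laurent_ord_def laurent_supp_p_poly)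
  hence "coeff (laurent_poly p_poly) k = p_poly (int k)"
    using coeff_laurent_poly[of p_poly k] by (simp add: laurent_supp_p_poly)
  thus "coeff (laurent_poly p_poly) k = coeff p_as_poly k"
    by (simp add: p_poly_def p_as_poly_def coeff_pCons split: nat.splits)
qed

lemma laurent_poly_one: "laurent_poly (\<lambda>n. if n = 0 then 1 else 0) = 1"
proof -
  have "laurent_supp (\<lambda>n. if n = 0 then (1::complex) else 0) = {0}"
    by (auto simp: laurent_supp_def)
  thus ?thesis by (simp add: laurent_poly_def laurent_ord_def)
qed

definition laurent_monom :: "complex \<Rightarrow> int \<Rightarrow> int \<Rightarrow> complex" where
  "laurent_monom u k = (\<lambda>n. if n = k then u else 0)"

lemma laurent_mult_monom_right:
  assumes "finite (laurent_supp f)"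
  shows "laurent_mult f (laurent_monom u k) = (\<lambda>n. f (n - k) * u)"
proof
  fix n
  have "laurent_mult f (laurent_monom u k) n = (\<Sum>m\<in>laurent_supp f. if m = n - k then f m * u else 0)"
    unfolding laurent_mult_def laurent_monom_def laurent_supp_def by (rule sum.cong) auto
  also have "\<dots> = f (n - k) * u" using assms by (simp add: laurent_supp_def sum.delta')
  finally show "laurent_mult f (laurent_monom u k) n = f (n - k) * u" .
qed

lemma laurent_mult_monom_left:
  assumes "u \<noteq> 0"
  shows "laurent_mult (laurent_monom u k) g = (\<lambda>n. u * g (n - k))"
proof -
  have "{m. laurent_monom u k m \<noteq> 0} = {k}" using assms by (auto simp: laurent_monom_def)
  thus ?thesis by (simp add: laurent_mult_def laurent_monom_def)
qed

lemma laurent_mult_monom_cancel: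
  assumes "finite (laurent_supp f)" "u \<noteq> 0"
  shows "laurent_mult (laurent_mult f (laurent_monom u k)) (laurent_monom (inverse u) (- k)) = f"
proof -
  have "laurent_supp (\<lambda>n. f (n - k) * u) = (\<lambda>n. n + k) ` laurent_supp f"
    using assms(2) by (force simp: laurent_supp_def image_iff)
  hence "finite (laurent_supp (\<lambda>n. f (n - k) * u))" using assms(1) by simp
  thus ?thesis using assms by (simp add: laurent_mult_monom_right fun_eq_iff)
qed

lemma (in complex_subfield) laurent_monom_in_carrier:
  "u \<in> F \<Longrightarrow> laurent_monom u k \<in> carrier (laurent_ring F)"
  using finite_subset[of "laurent_supp (laurent_monom u k)" "{k}"]
  by (auto simp: carrier_laurent_ring laurent_monom_def laurent_supp_def zero_mem)

lemma (in complex_subfield) laurent_monom_in_Units: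
  assumes "u \<in> F" "u \<noteq> 0"
  shows "laurent_monom u k \<in> Units (laurent_ring F)"
proof -
  have v: "inverse u \<in> F" "inverse u \<noteq> 0" using assms by (simp_all add: inverse_mem)
  have "laurent_mult (laurent_monom (inverse u) (- k)) (laurent_monom u k) = \<one>\<^bsub>laurent_ring F\<^esub>"
    "laurent_mult (laurent_monom u k) (laurent_monom (inverse u) (- k)) = \<one>\<^bsub>laurent_ring F\<^esub>"
    unfolding laurent_mult_monom_left[OF v(2)] laurent_mult_monom_left[OF assms(2)] one_laurent_ring
    using assms by (auto simp: laurent_monom_def fun_eq_iff)
  thus ?thesis using laurent_monom_in_carrier assms(1) v(1)
    unfolding Units_def mult_laurent_ring by blast
qed

lemma laurent_monom_if_degree_0:
  assumes f: "finite (laurent_supp f)" "laurent_supp f \<noteq> {}" and deg: "degree (laurent_poly f) = 0"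
  shows "f = laurent_monom (f (laurent_ord f)) (laurent_ord f)"
proof
  fix n
  consider "n < laurent_ord f" | "n = laurent_ord f" | "n > laurent_ord f" by linarith
  thus "f n = laurent_monom (f (laurent_ord f)) (laurent_ord f) n"
  proof cases
    case 1
    hence "n \<notin> laurent_supp f" using f by (auto simp: laurent_ord_def)
    thus ?thesis using 1 by (simp add: laurent_supp_def laurent_monom_def)
  next
    case 3
    define j where "j = nat (n - laurent_ord f)"
    have "j > 0" "n = laurent_ord f + int j" using 3 by (simp_all add: j_def)
    moreover have "coeff (laurent_poly f) j = 0" using deg \<open>j > 0\<close> by (simp add: coeff_eq_0)
    ultimately show ?thesis using coeff_laurent_poly[OF f, of j] by (simp add: laurent_monom_def)
  qed (simp add: laurent_monom_def)
qed

lemma p_poly_factor_monomial: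
  assumes b: "b \<in> carrier Gamma7" and c: "c \<in> carrier Gamma7" and bc: "laurent_mult b c = p_poly"
  shows "\<exists>u \<in> Qzeta7 - {0}. \<exists>k. b = laurent_monom u k \<or> c = laurent_monom u k"
proof -
  interpret K: complex_subfield Qzeta7 by (rule complex_subfield_Qzeta7)
  have fin: "finite (laurent_supp b)" "finite (laurent_supp c)" and K: "\<And>n. b n \<in> Qzeta7" "\<And>n. c n \<in> Qzeta7"
    using b c by (simp_all add: Gamma7_def carrier_laurent_ring)
  have "laurent_supp b \<noteq> {}" "laurent_supp c \<noteq> {}"
    using laurent_mult_supp_empty[of b c] bc p_poly_neq_0 by auto
  note bc_supp = fin(1) this(1) fin(2) this(2)
  have "laurent_poly b * laurent_poly c = p_as_poly"
    using laurent_poly_mult[OF bc_supp] bc by (simp add: laurent_supp_p_poly laurent_poly_p_poly)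
  moreover have "coeff (laurent_poly f) i \<in> Qzeta7" if "f \<in> {b, c}" for f i
    using that by (auto simp: coeff_laurent_poly bc_supp K)
  ultimately have "degree (laurent_poly b) = 0 \<or> degree (laurent_poly c) = 0"
    by (intro K.p_as_poly_factor_degree_0[OF Qzeta7_square_neq]) auto
  moreover have "f (laurent_ord f) \<in> Qzeta7 - {0}" if "f \<in> {b, c}" for f
    using that bc_supp K Min_in[of "laurent_supp f"] by (auto simp: laurent_ord_def laurent_supp_def)
  ultimately show ?thesis using laurent_monom_if_degree_0 bc_supp by blast
qed

lemma p_poly_not_unit: "p_poly \<notin> Units Gamma7"
proof
  assume "p_poly \<in> Units Gamma7"
  then obtain x where x: "x \<in> carrier Gamma7" "laurent_mult x p_poly = \<one>\<^bsub>Gamma7\<^esub>"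
    unfolding Units_def Gamma7_def mult_laurent_ring by blast
  have one: "\<one>\<^bsub>Gamma7\<^esub> = (\<lambda>n. if n = 0 then 1 else 0)" by (simp add: Gamma7_def one_laurent_ring)
  have "laurent_supp (laurent_mult x p_poly) = {0}" using x(2) by (auto simp: one laurent_supp_def)
  moreover have "finite (laurent_supp x)" using x(1) by (simp add: Gamma7_def carrier_laurent_ring)
  moreover have "laurent_supp x \<noteq> {}"
    using laurent_mult_supp_empty[of x p_poly] \<open>laurent_supp (laurent_mult x p_poly) = {0}\<close> by auto
  ultimately have "laurent_poly x * p_as_poly = 1"
    using laurent_poly_mult[of x p_poly] x(2)
    by (simp add: laurent_supp_p_poly laurent_poly_p_poly one laurent_poly_one)
  moreover have "laurent_poly x \<noteq> 0" "p_as_poly \<noteq> 0" "degree p_as_poly = 4"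
    using \<open>laurent_poly x * p_as_poly = 1\<close> by (auto simp: p_as_poly_def)
  ultimately show False using degree_mult_eq[of "laurent_poly x" p_as_poly] by simp
qed

theorem mainTheorem6:
  shows "ring_irreducible\<^bsub>Gamma7\<^esub> p_poly"
proof -
  interpret K: complex_subfield Qzeta7 by (rule complex_subfield_Qzeta7)
  have "b \<in> Units Gamma7" if b: "b \<in> carrier Gamma7" and "properfactor Gamma7 b p_poly" for b
  proof -
    have not_dvd: "\<not> p_poly divides\<^bsub>Gamma7\<^esub> b"
      and "b divides\<^bsub>Gamma7\<^esub> p_poly" using \<open>properfactor Gamma7 b p_poly\<close> by (auto simp: properfactor_def)
    then obtain c where c: "c \<in> carrier Gamma7" "laurent_mult b c = p_poly"
      by (auto simp: factor_def Gamma7_def mult_laurent_ring)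
    obtain u k where u: "u \<in> Qzeta7" "u \<noteq> 0"
      and monom: "b = laurent_monom u k \<or> c = laurent_monom u k"
      using p_poly_factor_monomial[OF b c] by blast
    from monom show ?thesis
    proof
      assume "c = laurent_monom u k"
      hence "b = laurent_mult p_poly (laurent_monom (inverse u) (- k))"
        using c(2) laurent_mult_monom_cancel[of b u k] b u(2) by (simp add: Gamma7_def carrier_laurent_ring)
      moreover have "laurent_monom (inverse u) (- k) \<in> carrier Gamma7"
        using u(1) by (simp add: Gamma7_def K.laurent_monom_in_carrier K.inverse_mem)
      ultimately have "p_poly divides\<^bsub>Gamma7\<^esub> b"
        unfolding factor_def by (auto simp: Gamma7_def mult_laurent_ring)
      thus ?thesis using not_dvd by contradiction
    qed (simp add: Gamma7_def K.laurent_monom_in_Units u)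
  qed
  moreover have "p_poly \<noteq> \<zero>\<^bsub>Gamma7\<^esub>" using p_poly_neq_0 by (simp add: Gamma7_def zero_laurent_ring)
  ultimately show ?thesis
    unfolding ring_irreducible_def Divisibility.irreducible_def using p_poly_not_unit by blast
qed

end
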